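(* Let $F\subseteq\mathcal{O}_{C,O}(\tau)$ be the face given by $x_b=0$ for some $b\in C\setminus\{\hat{0}\}$, where $P_\tau=C\sqcup O$ is a $k$-decomposition. If $b\in Y^i$, then $F$ is affinely isomorphic to $\mathcal{O}_{\tilde{C},O}(\tilde{\tau})$, where \[ \tilde{\tau}=(\tau_1,\dots,\tau_{i-1},\tau_i-1,\tau_{i+1},\dots,\tau_\ell) \] and $\tilde{C}=C\setminus\{b\}$. If $\tau_i-1=0$, this zero entry is omitted from $\tilde{\tau}$ (i.e. the rank level disappears).
   Context: For $\tau=(\tau_1,\dots,\tau_\ell)\in\mathbb{Z}_{>0}^\ell$, $P_\tau$ is the maximal ranked poset having $\tau_i$ elements in rank $i$, where any two elements of distinct ranks are comparable; it is extended by a minimum $\hat{0}$ and a maximum $\hat{1}$. Let $Y^i$ denote the set of elements of rank $i$, with $Y^0=\{\hat{0}\}$ and $Y^{\ell+1}=\{\hat{1}\}$. For $0\le k\le\ell$, the $k$-decomposition is $P_\tau=C\sqcup O$ with $C=\bigcup_{i=0}^k Y^i$ and $O=\bigcup_{i=k+1}^{\ell+1}Y^i$. The chain-order polytope $\mathcal{O}_{C,O}(\tau)$ is defined by: $x_{\hat{0}}=0$, $x_{\hat{1}}=1$; $0\le x_p$ for each $p\in C$; $x_a\le x_b$ for each covering relation $a\prec b$ with $a,b\in O$; and $x_{p_1}+\dots+x_{p_k}\le x_{q}$ for any choice of $p_j\in Y^j$ ($1\le j\le k$) and $q\in Y^{k+1}$. Two polytopes are identified up to affine isomorphism. *)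

theory Defs
  imports Complex_Main
begin

text \<open>The element number j (0 <= j < tau_i) of rank i (1 <= i <= l) is encoded as the pair (i, j).
  The minimum 0hat and maximum 1hat carry the fixed coordinates 0 and 1 and are not
  coordinates of the ambient space; they are built into the constraints below.\<close>

definition elems :: "nat list \<Rightarrow> (nat \<times> nat) set" where
  "elems \<tau> = {(i, j). 1 \<le> i \<and> i \<le> length \<tau> \<and> j < \<tau> ! (i - 1)}"

text \<open>Chain-order polytope of the k-decomposition C = Y^0 u ... u Y^k, O = Y^(k+1) u ... u Y^(l+1).
  Points are real functions on pairs, vanishing outside elems tau (i.e. points of R^(P_tau)).
  Covering relations of P_tau are exactly the pairs of elements in consecutive ranks.\<close>

definition chain_order_polytope :: "nat list \<Rightarrow> nat \<Rightarrow> ((nat \<times> nat) \<Rightarrow> real) set" where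
  "chain_order_polytope \<tau> k = {x.
     (\<forall>p. p \<notin> elems \<tau> \<longrightarrow> x p = 0) \<and>
     \<comment> \<open>0 <= x_p for p in C (trivial for 0hat)\<close>
     (\<forall>i j. 1 \<le> i \<and> i \<le> k \<and> j < \<tau> ! (i - 1) \<longrightarrow> 0 \<le> x (i, j)) \<and>
     \<comment> \<open>x_a <= x_b for coverings a < b inside O between ranks i, i+1 with i+1 <= l\<close>
     (\<forall>i j j'. k + 1 \<le> i \<and> i < length \<tau> \<and> j < \<tau> ! (i - 1) \<and> j' < \<tau> ! i
         \<longrightarrow> x (i, j) \<le> x (i + 1, j')) \<and>
     \<comment> \<open>x_a <= x_1hat = 1 for a of rank l in O\<close>
     (\<forall>j. k + 1 \<le> length \<tau> \<and> j < \<tau> ! (length \<tau> - 1) \<longrightarrow> x (length \<tau>, j) \<le> 1) \<and>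
     \<comment> \<open>chain inequalities x_(p_1) + ... + x_(p_k) <= x_q, q in Y^(k+1)\<close>
     (\<forall>p :: nat \<Rightarrow> nat. (\<forall>r \<in> {1..k}. p r < \<tau> ! (r - 1)) \<longrightarrow>
        (if k < length \<tau>
         then (\<forall>q < \<tau> ! k. (\<Sum>r = 1..k. x (r, p r)) \<le> x (k + 1, q))
         else (\<Sum>r = 1..k. x (r, p r)) \<le> 1))}"

text \<open>Affine isomorphism of point sets P in R^E and Q in R^E' (E, E' finite coordinate sets,
  points represented as functions vanishing outside the coordinate set): there is an affine map
  R^E -> R^E' restricting to a bijection from P onto Q.  (An affine map injective on a convex
  set is injective on its affine hull, so this is the usual notion for polytopes.)\<close>

definition aff_isomorphic ::
  "'a set \<Rightarrow> ('a \<Rightarrow> real) set \<Rightarrow> 'b set \<Rightarrow> ('b \<Rightarrow> real) set \<Rightarrow> bool" where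
  "aff_isomorphic E P E' Q \<longleftrightarrow>
     (\<exists>(A :: 'b \<Rightarrow> 'a \<Rightarrow> real) (c :: 'b \<Rightarrow> real).
        let f = (\<lambda>x q. if q \<in> E' then c q + (\<Sum>p\<in>E. A q p * x p) else 0)
        in inj_on f P \<and> f ` P = Q)"

text \<open>tau-tilde: decrease tau_i by one, omitting the entry if it becomes 0;
  in the latter case C-tilde = C minus b is the (k-1)-decomposition.\<close>

definition tau_tilde :: "nat list \<Rightarrow> nat \<Rightarrow> nat list" where
  "tau_tilde \<tau> i = (if \<tau> ! (i - 1) = 1 then take (i - 1) \<tau> @ drop i \<tau>
                     else \<tau>[i - 1 := \<tau> ! (i - 1) - 1])"

definition k_tilde :: "nat list \<Rightarrow> nat \<Rightarrow> nat \<Rightarrow> nat" where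
  "k_tilde \<tau> k i = (if \<tau> ! (i - 1) = 1 then k - 1 else k)"

end

theory Submission
  imports Defs
begin

(* On the face x_b = 0 the coordinate x_b carries no information, so deleting it and relabelling
   the remaining elements of P_tau maps the face bijectively onto the smaller polytope; the only
   work is to see that the constraints match.  Quantifying over all chains, the chain inequalities
   say that the sum over the ranks 1..k of the largest coordinate in each rank is at most every
   coordinate of rank k + 1 (or 1 if k = l).  If b shares its rank with other elements, these are
   nonnegative, so dropping the zero x_b leaves the maximum of that rank unchanged.  If b is alone
   in its rank, this rank contributes its maximum x_b = 0 to the sum and can be removed, shifting
   the higher ranks down and k to k - 1. *)

lemma elems_eq_Sigma: "elems \<tau> = (SIGMA r:{1..length \<tau>}. {..<\<tau> ! (r - 1)})"
  unfolding elems_def by auto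

lemma finite_elems: "finite (elems \<tau>)"
  unfolding elems_eq_Sigma by auto

definition pullback :: "('b \<Rightarrow> 'a) \<Rightarrow> 'b set \<Rightarrow> ('a \<Rightarrow> real) \<Rightarrow> 'b \<Rightarrow> real" where
  "pullback \<sigma> E' x = (\<lambda>q. if q \<in> E' then x (\<sigma> q) else 0)"

lemma aff_isomorphic_pullback:
  assumes fin: "finite E" and \<sigma>: "bij_betw \<sigma> E' (E - {b})"
    and F_supp: "\<And>x. x \<in> F \<Longrightarrow> \<forall>p. p \<notin> E - {b} \<longrightarrow> x p = 0"
    and Q_supp: "\<And>y. y \<in> Q \<Longrightarrow> \<forall>q. q \<notin> E' \<longrightarrow> y q = 0"
    and F_iff_Q: "\<And>x. \<forall>p. p \<notin> E - {b} \<longrightarrow> x p = 0 \<Longrightarrow> x \<in> F \<longleftrightarrow> pullback \<sigma> E' x \<in> Q"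
  shows "aff_isomorphic E F E' Q"
proof -
  define A where "A q p = (of_bool (p = \<sigma> q) :: real)" for q p
  have \<sigma>_into: "\<sigma> q \<in> E" if "q \<in> E'" for q
    using \<sigma> that by (auto dest: bij_betw_apply)
  have affine: "(\<lambda>x q. if q \<in> E' then 0 + (\<Sum>p\<in>E. A q p * x p) else 0) = pullback \<sigma> E'"
  proof (intro ext)
    fix x q
    have "E \<inter> {p. p = \<sigma> q} = {\<sigma> q}" if "q \<in> E'" using \<sigma>_into[OF that] by auto
    then show "(if q \<in> E' then 0 + (\<Sum>p\<in>E. A q p * x p) else 0) = pullback \<sigma> E' x q"
      using fin by (simp add: A_def pullback_def)
  qed
  have "inj_on (pullback \<sigma> E') F"
  proof (rule inj_onI, rule ext)
    fix x x' p assume x: "x \<in> F" and x': "x' \<in> F" and eq: "pullback \<sigma> E' x = pullback \<sigma> E' x'"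
    show "x p = x' p"
    proof (cases "p \<in> E - {b}")
      case True
      then obtain q where "q \<in> E'" "p = \<sigma> q" using \<sigma> by (auto simp: bij_betw_def)
      then show ?thesis using fun_cong[OF eq, of q] by (simp add: pullback_def)
    qed (use F_supp[OF x] F_supp[OF x'] in auto)
  qed
  moreover have "pullback \<sigma> E' ` F = Q"
  proof (intro equalityI subsetI)
    fix y assume y: "y \<in> Q"
    define x where "x p = (if p \<in> E - {b} then y (inv_into E' \<sigma> p) else 0)" for p
    have "pullback \<sigma> E' x = y"
      using Q_supp[OF y] bij_betw_apply[OF \<sigma>] bij_betw_inv_into_left[OF \<sigma>]
      by (auto simp: pullback_def x_def)
    moreover have "x \<in> F" using F_iff_Q[of x] y \<open>pullback \<sigma> E' x = y\<close> by (simp add: x_def)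
    ultimately show "y \<in> pullback \<sigma> E' ` F" by blast
  qed (use F_iff_Q F_supp in blast)
  ultimately show ?thesis
    unfolding aff_isomorphic_def Let_def by (intro exI[of _ A] exI[of _ "\<lambda>_. 0"]) (simp only: affine)
qed

lemma sum_le_for_all_choices_iff_sum_Max_le:
  fixes g :: "'i \<Rightarrow> 'a \<Rightarrow> 'b :: {ordered_comm_monoid_add, linorder}"
  assumes "finite I" and S: "\<And>r. r \<in> I \<Longrightarrow> finite (S r) \<and> S r \<noteq> {}"
  shows "(\<forall>p. (\<forall>r\<in>I. p r \<in> S r) \<longrightarrow> (\<Sum>r\<in>I. g r (p r)) \<le> c)
           \<longleftrightarrow> (\<Sum>r\<in>I. Max (g r ` S r)) \<le> c"
proof
  have "\<forall>r\<in>I. \<exists>s\<in>S r. g r s = Max (g r ` S r)"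
    using S by (metis (no_types, lifting) Max_in empty_is_image finite_imageI imageE)
  then obtain p where "\<forall>r\<in>I. p r \<in> S r \<and> g r (p r) = Max (g r ` S r)" by metis
  then show "(\<Sum>r\<in>I. Max (g r ` S r)) \<le> c" if "\<forall>p. (\<forall>r\<in>I. p r \<in> S r) \<longrightarrow> (\<Sum>r\<in>I. g r (p r)) \<le> c"
    using that by (metis (no_types, lifting) sum.cong)
next
  assume "(\<Sum>r\<in>I. Max (g r ` S r)) \<le> c"
  moreover have "(\<Sum>r\<in>I. g r (p r)) \<le> (\<Sum>r\<in>I. Max (g r ` S r))" if "\<forall>r\<in>I. p r \<in> S r" for p
    using S that by (intro sum_mono) simp
  ultimately show "\<forall>p. (\<forall>r\<in>I. p r \<in> S r) \<longrightarrow> (\<Sum>r\<in>I. g r (p r)) \<le> c" by force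
qed

definition level_values :: "nat list \<Rightarrow> (nat \<times> nat \<Rightarrow> real) \<Rightarrow> nat \<Rightarrow> real set" where
  "level_values \<tau> x r = x ` {p \<in> elems \<tau>. fst p = r}"

lemma level_values_eq:
  "1 \<le> r \<Longrightarrow> r \<le> length \<tau> \<Longrightarrow> level_values \<tau> x r = (\<lambda>s. x (r, s)) ` {..<\<tau> ! (r - 1)}"
  unfolding level_values_def elems_def by force

lemma finite_level_values: "finite (level_values \<tau> x r)"
  unfolding level_values_def using finite_elems by simp

lemma level_values_nonempty:
  assumes "\<forall>t \<in> set \<tau>. 0 < t" "1 \<le> r" "r \<le> length \<tau>"
  shows "level_values \<tau> x r \<noteq> {}"
  using assms by (auto simp: level_values_eq)

definition chain_order_conditions :: "(nat \<Rightarrow> real set) \<Rightarrow> nat \<Rightarrow> nat \<Rightarrow> bool" where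
  "chain_order_conditions L n k \<longleftrightarrow>
     (\<forall>r \<in> {1..k}. \<forall>v \<in> L r. 0 \<le> v) \<and>
     (\<forall>r. k + 1 \<le> r \<and> r < n \<longrightarrow> (\<forall>v \<in> L r. \<forall>w \<in> L (r + 1). v \<le> w)) \<and>
     (k + 1 \<le> n \<longrightarrow> (\<forall>v \<in> L n. v \<le> 1)) \<and>
     (if k < n then \<forall>w \<in> L (k + 1). (\<Sum>r = 1..k. Max (L r)) \<le> w
      else (\<Sum>r = 1..k. Max (L r)) \<le> 1)"

lemma chain_order_polytope_iff_levels:
  assumes pos: "\<forall>t \<in> set \<tau>. 0 < t" and k: "k \<le> length \<tau>"
  shows "x \<in> chain_order_polytope \<tau> k \<longleftrightarrow>
           (\<forall>p. p \<notin> elems \<tau> \<longrightarrow> x p = 0) \<and>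
           chain_order_conditions (level_values \<tau> x) (length \<tau>) k"
proof -
  let ?L = "level_values \<tau> x" and ?n = "length \<tau>"
  have L: "?L r = (\<lambda>s. x (r, s)) ` {..<\<tau> ! (r - 1)}" if "1 \<le> r" "r \<le> ?n" for r
    using that by (rule level_values_eq)
  have nonneg: "(\<forall>r s. 1 \<le> r \<and> r \<le> k \<and> s < \<tau> ! (r - 1) \<longrightarrow> 0 \<le> x (r, s))
      \<longleftrightarrow> (\<forall>r \<in> {1..k}. \<forall>v \<in> ?L r. 0 \<le> v)"
    using k by (auto simp: L)
  have monotone: "(\<forall>r s s'. k + 1 \<le> r \<and> r < ?n \<and> s < \<tau> ! (r - 1) \<and> s' < \<tau> ! r
                      \<longrightarrow> x (r, s) \<le> x (r + 1, s'))
      \<longleftrightarrow> (\<forall>r. k + 1 \<le> r \<and> r < ?n \<longrightarrow> (\<forall>v \<in> ?L r. \<forall>w \<in> ?L (r + 1). v \<le> w))"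
    by (auto simp: L)
  have top: "(\<forall>s. k + 1 \<le> ?n \<and> s < \<tau> ! (?n - 1) \<longrightarrow> x (?n, s) \<le> 1)
      \<longleftrightarrow> (k + 1 \<le> ?n \<longrightarrow> (\<forall>v \<in> ?L ?n. v \<le> 1))"
    by (auto simp: L)
  have choices: "(\<forall>p. (\<forall>r \<in> {1..k}. p r < \<tau> ! (r - 1)) \<longrightarrow> (\<Sum>r = 1..k. x (r, p r)) \<le> c)
      \<longleftrightarrow> (\<Sum>r = 1..k. Max (?L r)) \<le> c" for c
  proof -
    have "{..<\<tau> ! (r - 1)} \<noteq> {}" if "r \<in> {1..k}" for r
      using pos that k by auto
    then show ?thesis
      using sum_le_for_all_choices_iff_sum_Max_le[of "{1..k}" "\<lambda>r. {..<\<tau> ! (r - 1)}" "\<lambda>r s. x (r, s)" c]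
        k by (simp add: L)
  qed
  have chain: "(\<forall>p. (\<forall>r \<in> {1..k}. p r < \<tau> ! (r - 1)) \<longrightarrow>
        (if k < ?n then \<forall>q < \<tau> ! k. (\<Sum>r = 1..k. x (r, p r)) \<le> x (k + 1, q)
         else (\<Sum>r = 1..k. x (r, p r)) \<le> 1))
      \<longleftrightarrow> (if k < ?n then \<forall>w \<in> ?L (k + 1). (\<Sum>r = 1..k. Max (?L r)) \<le> w
          else (\<Sum>r = 1..k. Max (?L r)) \<le> 1)"
  proof (cases "k < ?n")
    case True
    have "(\<forall>w \<in> ?L (k + 1). (\<Sum>r = 1..k. Max (?L r)) \<le> w)
        \<longleftrightarrow> (\<forall>q < \<tau> ! k. (\<Sum>r = 1..k. Max (?L r)) \<le> x (k + 1, q))"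
      using True by (auto simp: L)
    with True choices show ?thesis by auto
  qed (use choices in auto)
  show ?thesis
    unfolding chain_order_polytope_def chain_order_conditions_def mem_Collect_eq
    by (simp only: nonneg monotone top chain)
qed

lemma chain_order_conditions_insert_zero:
  assumes i: "1 \<le> i" "i \<le> k"
    and L: "\<And>r. r \<noteq> i \<Longrightarrow> L r = L' r" and Li: "L i = insert 0 (L' i)"
    and fin: "finite (L' i)" "L' i \<noteq> {}"
  shows "chain_order_conditions L n k \<longleftrightarrow> chain_order_conditions L' n k"
proof -
  have nonneg: "(\<forall>r \<in> {1..k}. \<forall>v \<in> L r. 0 \<le> v) \<longleftrightarrow> (\<forall>r \<in> {1..k}. \<forall>v \<in> L' r. 0 \<le> v)"
    using L Li by (metis insert_iff order_refl)
  have "Max (L r) = Max (L' r)" if "\<forall>v \<in> L' i. 0 \<le> v" for r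
    using that fin Max_in[OF fin] L by (cases "r = i") (simp_all add: Li)
  then have "(\<Sum>r = 1..k. Max (L r)) = (\<Sum>r = 1..k. Max (L' r))" if "\<forall>v \<in> L' i. 0 \<le> v"
    using that by simp
  moreover have "L r = L' r" if "k < r" for r
    using L that i by simp
  ultimately show ?thesis
    unfolding chain_order_conditions_def using nonneg i by auto
qed

definition skip_index :: "nat \<Rightarrow> nat \<Rightarrow> nat" where
  "skip_index i r = (if r < i then r else Suc r)"

lemma inj_skip_index: "inj (skip_index i)"
  by (rule injI) (auto simp: skip_index_def split: if_splits)

lemma skip_index_image:
  assumes "1 \<le> i" "i \<le> k"
  shows "skip_index i ` {1..k - 1} = {1..k} - {i}"
proof (intro equalityI subsetI)
  fix r assume "r \<in> {1..k} - {i}"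
  then have "r = skip_index i (if r < i then r else r - 1) \<and> (if r < i then r else r - 1) \<in> {1..k - 1}"
    using assms by (auto simp: skip_index_def)
  then show "r \<in> skip_index i ` {1..k - 1}" by blast
qed (use assms in \<open>auto simp: skip_index_def\<close>)

lemma sum_atLeastAtMost_skip_index:
  assumes "1 \<le> i" "i \<le> k"
  shows "(\<Sum>r = 1..k. g r) = g i + (\<Sum>r = 1..k - 1. g (skip_index i r))"
proof -
  have "(\<Sum>r = 1..k. g r) = g i + (\<Sum>r \<in> {1..k} - {i}. g r)"
    using assms by (simp add: sum.remove)
  also have "(\<Sum>r \<in> {1..k} - {i}. g r) = (\<Sum>r = 1..k - 1. g (skip_index i r))"
    unfolding skip_index_image[OF assms, symmetric]
    by (rule sum.reindex[OF inj_on_subset[OF inj_skip_index], unfolded comp_def]) simp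
  finally show ?thesis .
qed

lemma chain_order_conditions_drop_level:
  assumes i: "1 \<le> i" "i \<le> k" and "k \<le> n"
    and Li: "L i = {0}" and L': "\<And>r. L' r = L (skip_index i r)"
  shows "chain_order_conditions L n k \<longleftrightarrow> chain_order_conditions L' (n - 1) (k - 1)"
proof -
  have above: "L' r = L (Suc r)" if "i \<le> r" for r
    using that by (simp add: L' skip_index_def)
  have "(\<forall>r \<in> {1..k}. P r) \<longleftrightarrow> P i \<and> (\<forall>r \<in> {1..k} - {i}. P r)" for P
    using i by auto
  then have nonneg: "(\<forall>r \<in> {1..k}. \<forall>v \<in> L r. 0 \<le> v) \<longleftrightarrow> (\<forall>r \<in> {1..k - 1}. \<forall>v \<in> L' r. 0 \<le> v)"
    unfolding skip_index_image[OF i, symmetric] by (simp add: Li L')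
  have chain_sum: "(\<Sum>r = 1..k. Max (L r)) = (\<Sum>r = 1..k - 1. Max (L' r))"
    using sum_atLeastAtMost_skip_index[OF i, of "\<lambda>r. Max (L r)"] by (simp add: Li L')
  have shift: "(\<forall>r. k + 1 \<le> r \<and> r < n \<longrightarrow> P r) \<longleftrightarrow> (\<forall>r. k \<le> r \<and> r < n - 1 \<longrightarrow> P (Suc r))" for P
  proof (intro iffI allI impI)
    fix r assume "\<forall>r. k \<le> r \<and> r < n - 1 \<longrightarrow> P (Suc r)" and "k + 1 \<le> r \<and> r < n"
    moreover have "k \<le> r - 1 \<and> r - 1 < n - 1" "Suc (r - 1) = r" using calculation(2) by auto
    ultimately show "P r" by metis
  qed auto
  have order: "(\<forall>r. k + 1 \<le> r \<and> r < n \<longrightarrow> (\<forall>v \<in> L r. \<forall>w \<in> L (r + 1). v \<le> w))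
      \<longleftrightarrow> (\<forall>r. k - 1 + 1 \<le> r \<and> r < n - 1 \<longrightarrow> (\<forall>v \<in> L' r. \<forall>w \<in> L' (r + 1). v \<le> w))"
    unfolding shift using i by (simp add: above)
  have top: "(k + 1 \<le> n \<longrightarrow> (\<forall>v \<in> L n. v \<le> 1)) \<longleftrightarrow> (k - 1 + 1 \<le> n - 1 \<longrightarrow> (\<forall>v \<in> L' (n - 1). v \<le> 1))"
    using i above[of "n - 1"] by auto
  have chain: "(if k < n then \<forall>w \<in> L (k + 1). (\<Sum>r = 1..k - 1. Max (L' r)) \<le> w
                else (\<Sum>r = 1..k - 1. Max (L' r)) \<le> 1)
      \<longleftrightarrow> (if k - 1 < n - 1 then \<forall>w \<in> L' (k - 1 + 1). (\<Sum>r = 1..k - 1. Max (L' r)) \<le> w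
          else (\<Sum>r = 1..k - 1. Max (L' r)) \<le> 1)"
    using i \<open>k \<le> n\<close> above[of k] by auto
  show ?thesis
    unfolding chain_order_conditions_def chain_sum by (simp only: nonneg order top chain)
qed

lemma level_values_pullback:
  assumes \<sigma>: "bij_betw \<sigma> (elems \<tau>') (elems \<tau> - {b})"
    and h: "inj h" and fst_\<sigma>: "\<And>q. fst (\<sigma> q) = h (fst q)"
  shows "level_values \<tau>' (pullback \<sigma> (elems \<tau>') x) r = x ` ({p \<in> elems \<tau>. fst p = h r} - {b})"
proof -
  have "\<sigma> ` {q \<in> elems \<tau>'. fst q = r} = {p \<in> elems \<tau>. fst p = h r} - {b}"
  proof (intro equalityI subsetI)
    fix p assume p: "p \<in> {p \<in> elems \<tau>. fst p = h r} - {b}"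
    then have "p \<in> \<sigma> ` elems \<tau>'" using \<sigma> by (simp add: bij_betw_def)
    then obtain q where "q \<in> elems \<tau>'" "p = \<sigma> q" by blast
    moreover have "fst q = r" using p \<open>p = \<sigma> q\<close> fst_\<sigma> injD[OF h] by auto
    ultimately show "p \<in> \<sigma> ` {q \<in> elems \<tau>'. fst q = r}" by blast
  next
    fix p assume "p \<in> \<sigma> ` {q \<in> elems \<tau>'. fst q = r}"
    then obtain q where q: "q \<in> elems \<tau>'" "fst q = r" "p = \<sigma> q" by blast
    then have "p \<in> elems \<tau> - {b}" using bij_betw_apply[OF \<sigma>] by blast
    then show "p \<in> {p \<in> elems \<tau>. fst p = h r} - {b}" using fst_\<sigma> q by auto
  qed
  moreover have "level_values \<tau>' (pullback \<sigma> (elems \<tau>') x) r = x ` \<sigma> ` {q \<in> elems \<tau>'. fst q = r}"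
    unfolding level_values_def pullback_def image_image by (rule image_cong) auto
  ultimately show ?thesis by simp
qed

lemma bij_betw_shrink_level:
  assumes "1 \<le> i" "i \<le> length \<tau>" "j < \<tau> ! (i - 1)"
  shows "bij_betw (\<lambda>(r, s). (r, if r = i then skip_index j s else s))
           (elems (\<tau>[i - 1 := \<tau> ! (i - 1) - 1])) (elems \<tau> - {(i, j)})"
proof (rule bij_betw_byWitness[where f' = "\<lambda>(r, s). (r, if r = i \<and> j < s then s - 1 else s)"])
  have "i - 1 < length \<tau>" using assms by simp
  then have nth: "\<tau>[i - 1 := \<tau> ! (i - 1) - 1] ! (r - 1) = (if r = i then \<tau> ! (i - 1) - 1 else \<tau> ! (r - 1))"
    if "1 \<le> r" for r using that assms(1) by (auto simp: nth_list_update)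
  show "\<forall>a\<in>elems (\<tau>[i - 1 := \<tau> ! (i - 1) - 1]). (\<lambda>(r, s). (r, if r = i \<and> j < s then s - 1 else s))
           ((\<lambda>(r, s). (r, if r = i then skip_index j s else s)) a) = a"
    by (auto simp: skip_index_def)
  show "\<forall>a\<in>elems \<tau> - {(i, j)}. (\<lambda>(r, s). (r, if r = i then skip_index j s else s))
           ((\<lambda>(r, s). (r, if r = i \<and> j < s then s - 1 else s)) a) = a"
    by (auto simp: skip_index_def split: if_splits)
  show "(\<lambda>(r, s). (r, if r = i then skip_index j s else s)) ` elems (\<tau>[i - 1 := \<tau> ! (i - 1) - 1]) \<subseteq> elems \<tau> - {(i, j)}"
    using nth by (auto simp: elems_def skip_index_def split: if_splits)
  show "(\<lambda>(r, s). (r, if r = i \<and> j < s then s - 1 else s)) ` (elems \<tau> - {(i, j)}) \<subseteq> elems (\<tau>[i - 1 := \<tau> ! (i - 1) - 1])"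
    using nth assms(3) by (auto simp: elems_def)
qed

lemma elems_drop_level:
  assumes "1 \<le> i" "i \<le> length \<tau>"
  shows "(r, s) \<in> elems (take (i - 1) \<tau> @ drop i \<tau>) \<longleftrightarrow> 1 \<le> r \<and> (skip_index i r, s) \<in> elems \<tau>"
proof -
  have "(take (i - 1) \<tau> @ drop i \<tau>) ! (r - 1) = \<tau> ! (skip_index i r - 1)"
    if "1 \<le> r" "r < length \<tau>" using that assms by (auto simp: nth_append skip_index_def)
  then show ?thesis
    using assms by (auto simp: elems_def skip_index_def)
qed

lemma bij_betw_drop_level:
  assumes "1 \<le> i" "i \<le> length \<tau>" "\<tau> ! (i - 1) = 1"
  shows "bij_betw (\<lambda>(r, s). (skip_index i r, s))
           (elems (take (i - 1) \<tau> @ drop i \<tau>)) (elems \<tau> - {(i, 0)})"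
proof (rule bij_betw_byWitness[where f' = "\<lambda>(r, s). (if i < r then r - 1 else r, s)"])
  have level_i: "(i, s) \<in> elems \<tau> \<longleftrightarrow> s = 0" for s
    using assms by (auto simp: elems_def)
  have skip_neq: "skip_index i r \<noteq> i" for r
    by (simp add: skip_index_def)
  have skip_unskip: "skip_index i (if i < r then r - 1 else r) = r" if "r \<noteq> i" for r
    using that by (auto simp: skip_index_def)
  show "\<forall>a\<in>elems (take (i - 1) \<tau> @ drop i \<tau>).
          (\<lambda>(r, s). (if i < r then r - 1 else r, s)) ((\<lambda>(r, s). (skip_index i r, s)) a) = a"
    by (clarsimp simp: skip_index_def)
  show "\<forall>a\<in>elems \<tau> - {(i, 0)}.
          (\<lambda>(r, s). (skip_index i r, s)) ((\<lambda>(r, s). (if i < r then r - 1 else r, s)) a) = a"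
    using level_i skip_unskip by fastforce
  show "(\<lambda>(r, s). (skip_index i r, s)) ` elems (take (i - 1) \<tau> @ drop i \<tau>) \<subseteq> elems \<tau> - {(i, 0)}"
    using elems_drop_level[OF assms(1,2)] skip_neq by fastforce
  show "(\<lambda>(r, s). (if i < r then r - 1 else r, s)) ` (elems \<tau> - {(i, 0)}) \<subseteq> elems (take (i - 1) \<tau> @ drop i \<tau>)"
  proof (rule image_subsetI)
    fix q assume "q \<in> elems \<tau> - {(i, 0)}"
    moreover obtain r s where "q = (r, s)" by fastforce
    ultimately have q: "q = (r, s)" "(r, s) \<in> elems \<tau>" "(r, s) \<noteq> (i, 0)" by auto
    have "r \<noteq> i" using q(2,3) level_i by blast
    have "1 \<le> (if i < r then r - 1 else r)" using q(2) assms(1) by (auto simp: elems_def)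
    then show "(\<lambda>(r, s). (if i < r then r - 1 else r, s)) q \<in> elems (take (i - 1) \<tau> @ drop i \<tau>)"
      using q skip_unskip[OF \<open>r \<noteq> i\<close>] elems_drop_level[OF assms(1,2)] by simp
  qed
qed

lemma aff_isomorphic_face_chain_order_polytope:
  assumes pos: "\<forall>t \<in> set \<tau>. 0 < t" and pos': "\<forall>t \<in> set \<tau>'. 0 < t"
    and k: "k \<le> length \<tau>" and k': "k' \<le> length \<tau>'"
    and \<sigma>: "bij_betw \<sigma> (elems \<tau>') (elems \<tau> - {b})"
    and levels: "\<And>x. x b = 0 \<Longrightarrow>
      chain_order_conditions (level_values \<tau> x) (length \<tau>) k \<longleftrightarrow>
      chain_order_conditions (level_values \<tau>' (pullback \<sigma> (elems \<tau>') x)) (length \<tau>') k'"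
  shows "aff_isomorphic (elems \<tau>) {x \<in> chain_order_polytope \<tau> k. x b = 0}
           (elems \<tau>') (chain_order_polytope \<tau>' k')"
proof (rule aff_isomorphic_pullback[OF finite_elems \<sigma>])
  show "\<forall>p. p \<notin> elems \<tau> - {b} \<longrightarrow> x p = 0" if "x \<in> {x \<in> chain_order_polytope \<tau> k. x b = 0}" for x
    using that chain_order_polytope_iff_levels[OF pos k] by auto
  show "\<forall>q. q \<notin> elems \<tau>' \<longrightarrow> y q = 0" if "y \<in> chain_order_polytope \<tau>' k'" for y
    using that chain_order_polytope_iff_levels[OF pos' k'] by auto
  show "x \<in> {x \<in> chain_order_polytope \<tau> k. x b = 0} \<longleftrightarrow> pullback \<sigma> (elems \<tau>') x \<in> chain_order_polytope \<tau>' k'"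
    if "\<forall>p. p \<notin> elems \<tau> - {b} \<longrightarrow> x p = 0" for x
  proof -
    have "x b = 0" "\<forall>p. p \<notin> elems \<tau> \<longrightarrow> x p = 0" using that by blast+
    moreover have "\<forall>q. q \<notin> elems \<tau>' \<longrightarrow> pullback \<sigma> (elems \<tau>') x q = 0"
      by (simp add: pullback_def)
    ultimately show ?thesis
      using levels[of x] by (simp add: chain_order_polytope_iff_levels[OF pos k] chain_order_polytope_iff_levels[OF pos' k'])
  qed
qed

lemma face_shrink_level:
  assumes pos: "\<forall>t \<in> set \<tau>. 0 < t" and k: "k \<le> length \<tau>" and i: "1 \<le> i" "i \<le> k"
    and j: "j < \<tau> ! (i - 1)" and "\<tau> ! (i - 1) \<noteq> 1"
  shows "aff_isomorphic (elems \<tau>) {x \<in> chain_order_polytope \<tau> k. x (i, j) = 0}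
           (elems (\<tau>[i - 1 := \<tau> ! (i - 1) - 1])) (chain_order_polytope (\<tau>[i - 1 := \<tau> ! (i - 1) - 1]) k)"
proof -
  define \<tau>' where "\<tau>' = \<tau>[i - 1 := \<tau> ! (i - 1) - 1]"
  define \<sigma> where "\<sigma> = (\<lambda>(r, s). (r, if r = i then skip_index j s else s))"
  have len: "length \<tau>' = length \<tau>"
    by (simp add: \<tau>'_def)
  have pos': "\<forall>t \<in> set \<tau>'. 0 < t"
    using pos j \<open>\<tau> ! (i - 1) \<noteq> 1\<close> set_update_subset_insert unfolding \<tau>'_def by fastforce
  have \<sigma>_bij: "bij_betw \<sigma> (elems \<tau>') (elems \<tau> - {(i, j)})"
    unfolding \<tau>'_def \<sigma>_def using i k j by (intro bij_betw_shrink_level) simp_all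
  show ?thesis
    unfolding \<tau>'_def[symmetric]
  proof (rule aff_isomorphic_face_chain_order_polytope[OF pos pos' k _ \<sigma>_bij])
    show "k \<le> length \<tau>'" using k len by simp
    fix x :: "nat \<times> nat \<Rightarrow> real" assume "x (i, j) = 0"
    let ?L = "level_values \<tau> x" and ?L' = "level_values \<tau>' (pullback \<sigma> (elems \<tau>') x)"
    have L': "?L' r = x ` ({p \<in> elems \<tau>. fst p = r} - {(i, j)})" for r
      using level_values_pullback[OF \<sigma>_bij inj_on_id] by (simp add: \<sigma>_def split_def)
    have "?L r = ?L' r" if "r \<noteq> i" for r
    proof -
      have "{p \<in> elems \<tau>. fst p = r} - {(i, j)} = {p \<in> elems \<tau>. fst p = r}" using that by auto
      then show ?thesis unfolding L' by (simp add: level_values_def)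
    qed
    moreover have "?L i = insert 0 (?L' i)"
    proof -
      have "(i, j) \<in> elems \<tau>" using i k j by (simp add: elems_def)
      then have "?L i = insert (x (i, j)) (x ` ({p \<in> elems \<tau>. fst p = i} - {(i, j)}))"
        unfolding level_values_def by auto
      then show ?thesis using \<open>x (i, j) = 0\<close> by (simp only: L')
    qed
    moreover have "?L' i \<noteq> {}"
      using level_values_nonempty[OF pos'] i k len by simp
    ultimately show "chain_order_conditions ?L (length \<tau>) k \<longleftrightarrow> chain_order_conditions ?L' (length \<tau>') k"
      using chain_order_conditions_insert_zero[OF i] finite_level_values len by simp
  qed
qed

lemma face_drop_level:
  assumes pos: "\<forall>t \<in> set \<tau>. 0 < t" and k: "k \<le> length \<tau>" and i: "1 \<le> i" "i \<le> k"
    and one: "\<tau> ! (i - 1) = 1"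
  shows "aff_isomorphic (elems \<tau>) {x \<in> chain_order_polytope \<tau> k. x (i, 0) = 0}
           (elems (take (i - 1) \<tau> @ drop i \<tau>)) (chain_order_polytope (take (i - 1) \<tau> @ drop i \<tau>) (k - 1))"
proof -
  define \<tau>' where "\<tau>' = take (i - 1) \<tau> @ drop i \<tau>"
  define \<sigma> where "\<sigma> = (\<lambda>(r, s). (skip_index i r, s :: nat))"
  have len: "length \<tau>' = length \<tau> - 1"
    using i k by (simp add: \<tau>'_def)
  have pos': "\<forall>t \<in> set \<tau>'. 0 < t"
    using pos set_take_subset set_drop_subset unfolding \<tau>'_def by fastforce
  have \<sigma>_bij: "bij_betw \<sigma> (elems \<tau>') (elems \<tau> - {(i, 0)})"
    unfolding \<tau>'_def \<sigma>_def using i k one by (intro bij_betw_drop_level) simp_all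
  show ?thesis
    unfolding \<tau>'_def[symmetric]
  proof (rule aff_isomorphic_face_chain_order_polytope[OF pos pos' k _ \<sigma>_bij])
    show "k - 1 \<le> length \<tau>'" using k len by simp
    fix x :: "nat \<times> nat \<Rightarrow> real" assume "x (i, 0) = 0"
    let ?L = "level_values \<tau> x" and ?L' = "level_values \<tau>' (pullback \<sigma> (elems \<tau>') x)"
    have "?L' r = x ` ({p \<in> elems \<tau>. fst p = skip_index i r} - {(i, 0)})" for r
      using level_values_pullback[OF \<sigma>_bij inj_skip_index] by (simp add: \<sigma>_def split_def)
    moreover have "{p \<in> elems \<tau>. fst p = skip_index i r} - {(i, 0)} = {p \<in> elems \<tau>. fst p = skip_index i r}" for r
      by (auto simp: skip_index_def)
    ultimately have L': "?L' r = ?L (skip_index i r)" for r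
      by (simp add: level_values_def)
    have Li: "?L i = {0}"
    proof -
      have "{p \<in> elems \<tau>. fst p = i} = {(i, 0)}" using i k one by (auto simp: elems_def)
      then show ?thesis using \<open>x (i, 0) = 0\<close> by (simp add: level_values_def)
    qed
    show "chain_order_conditions ?L (length \<tau>) k \<longleftrightarrow> chain_order_conditions ?L' (length \<tau>') (k - 1)"
      using chain_order_conditions_drop_level[OF i k Li L'] len by simp
  qed
qed

theorem proposition3p6:
  fixes \<tau> :: "nat list" and k i j :: nat
  assumes "\<forall>t \<in> set \<tau>. 0 < t"
    and "k \<le> length \<tau>"
    and "1 \<le> i" and "i \<le> k"
    and "j < \<tau> ! (i - 1)"
  shows "aff_isomorphic (elems \<tau>) {x \<in> chain_order_polytope \<tau> k. x (i, j) = 0}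
           (elems (tau_tilde \<tau> i)) (chain_order_polytope (tau_tilde \<tau> i) (k_tilde \<tau> k i))"
proof (cases "\<tau> ! (i - 1) = 1")
  case True
  with assms(5) have "j = 0" by simp
  with True show ?thesis
    using face_drop_level[OF assms(1-4) True] by (simp add: tau_tilde_def k_tilde_def)
next
  case False
  then show ?thesis
    using face_shrink_level[OF assms False] by (simp add: tau_tilde_def k_tilde_def)
qed

end
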